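(* Let $\mathbb{S}^n\subset\mathbb{R}^{n+1}$ be the unit round sphere, $o\in\mathbb{S}^n$, $1\le k\le n-1$, $E$ a $(k+1)$-dimensional linear subspace of $\mathbb{R}^{n+1}$ containing $o$, $\mathbb{S}^k_o=\mathbb{S}^n\cap E$ and $\mathbb{S}^{n-k-1}=\mathbb{S}^n\cap E^\perp$. Let $X_k\subset\mathbb{S}^k_o$ be a $k$-dimensional geodesically convex set, centrally symmetric around $o$ and containing $o$, contained in the open hemisphere $\mathbb{S}^k_{+}$ of $\mathbb{S}^k_o$ centered at $o$, and let $X_n=X_k*\mathbb{S}^{n-k-1}=\{\cos(t)u+\sin(t)v: u\in X_k,\ v\in\mathbb{S}^{n-k-1},\ t\in[0,\pi/2]\}$. Then $$\frac{\mathrm{vol}_n(X_n)}{\mathrm{vol}_n(\mathbb{S}^n_{+})}=\frac{\mathrm{vol}_k(X_k)}{\mathrm{vol}_k(\mathbb{S}^k_{+})},$$ where $\mathbb{S}^n_+$ is the open hemisphere of $\mathbb{S}^n$ centered at $o$.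
   Context: $\mathrm{vol}_j$ denotes $j$-dimensional Riemannian volume. Geodesic convexity: any two points are joined by a minimizing geodesic segment inside the set. Central symmetry around $o$: invariance under the geodesic reflection of the sphere at $o$. *)

theory Defs
  imports "HOL-Analysis.Analysis"
begin

definition sph_dist :: "'a::euclidean_space \<Rightarrow> 'a \<Rightarrow> real" where
  "sph_dist x y = arccos (x \<bullet> y)"

definition min_geodesic :: "(real \<Rightarrow> 'a::euclidean_space) \<Rightarrow> 'a \<Rightarrow> 'a \<Rightarrow> bool" where
  "min_geodesic \<gamma> x y \<longleftrightarrow> \<gamma> 0 = x \<and> \<gamma> 1 = y \<and> (\<forall>t\<in>{0..1}. \<gamma> t \<in> sphere 0 1) \<and>
     (\<forall>s\<in>{0..1}. \<forall>t\<in>{0..1}. sph_dist (\<gamma> s) (\<gamma> t) = \<bar>s - t\<bar> * sph_dist x y)"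

definition geod_convex :: "'a::euclidean_space set \<Rightarrow> bool" where
  "geod_convex X \<longleftrightarrow> X \<subseteq> sphere 0 1 \<and>
     (\<forall>x\<in>X. \<forall>y\<in>X. \<exists>\<gamma>. min_geodesic \<gamma> x y \<and> \<gamma> ` {0..1} \<subseteq> X)"

definition sph_reflect :: "'a::euclidean_space \<Rightarrow> 'a \<Rightarrow> 'a" where
  "sph_reflect o' x = (2 * (x \<bullet> o')) *\<^sub>R o' - x"

text \<open>Riemannian volume of a subset A of the unit sphere of a Euclidean space of
  dimension m+1, via the cone identity vol_m(A) = (m+1) * Lebesgue measure of the cone
  {t x : 0 \<le> t \<le> 1, x \<in> A}.\<close>
definition sph_cone :: "'a::euclidean_space set \<Rightarrow> 'a set" where
  "sph_cone A = {t *\<^sub>R x | t x. 0 \<le> t \<and> t \<le> 1 \<and> x \<in> A}"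

definition sph_vol :: "'a::euclidean_space set \<Rightarrow> real" where
  "sph_vol A = real DIM('a) * measure lebesgue (sph_cone A)"

definition open_hemisphere :: "'a::euclidean_space set \<Rightarrow> 'a \<Rightarrow> 'a set" where
  "open_hemisphere S o' = {x \<in> sphere 0 1 \<inter> S. x \<bullet> o' > 0}"

definition sph_join :: "'a::euclidean_space set \<Rightarrow> 'a set \<Rightarrow> 'a set" where
  "sph_join X Y = {cos t *\<^sub>R u + sin t *\<^sub>R v | t u v. u \<in> X \<and> v \<in> Y \<and> t \<in> {0..pi/2}}"

end

theory Submission
  imports Defs "HOL-Probability.Distributions"
begin

text \<open>Volumes on the unit sphere are volumes of the cones over the sets. Let \<open>P = adjoint f\<close>,
  the orthogonal projection onto \<open>E\<close> read in the coordinates of \<open>f\<close>. Up to the null set \<open>ker P\<close>,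
  the cone over the join of \<open>X\<^sub>k\<close> with the unit sphere of \<open>E\<^sup>\<bottom>\<close> is \<open>P -` C\<close>, cut off by the unit
  ball, where \<open>C\<close> is the cone over \<open>X\<^sub>k\<close>; the cone over the hemisphere is \<open>P -` H\<close> for the
  half-space \<open>H\<close> of \<open>E\<close> determined by \<open>o\<close>. Geodesic convexity inside an open hemisphere makes
  \<open>C\<close> convex.

  For a cone \<open>K\<close>, polar coordinates show that its Gaussian measure \<open>\<integral>\<^sub>K exp (- \<bar>y\<bar>\<^sup>2)\<close> is a
  dimensional constant times the volume of \<open>K\<close> within the unit ball, and the Gaussian measure is
  preserved by pulling back along \<open>P\<close>. Hence pulling back a convex cone along \<open>P\<close> multiplies its
  volume within the unit ball by the ratio of the volumes of the two unit balls, and both ratios in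
  the theorem become the ratio of the volumes of \<open>C\<close> and \<open>H\<close> within the unit ball of \<open>'k\<close>.\<close>

lemma nn_integral_lborel_translate:
  fixes c :: "'a::euclidean_space"
  assumes [measurable]: "h \<in> borel_measurable borel"
  shows "(\<integral>\<^sup>+x. h (x + c) \<partial>lborel) = (\<integral>\<^sup>+x. h x \<partial>lborel)"
proof -
  have "(\<integral>\<^sup>+x. h x \<partial>lborel) = (\<integral>\<^sup>+x. h x \<partial>distr lborel borel ((+) c))"
    by (simp add: lborel_distr_plus)
  also have "\<dots> = (\<integral>\<^sup>+x. h (c + x) \<partial>lborel)"
    by (rule nn_integral_distr) auto
  finally show ?thesis
    by (simp add: add.commute)
qed

lemma nn_integral_lborel_uminus:
  fixes h :: "'a::euclidean_space \<Rightarrow> ennreal"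
  assumes [measurable]: "h \<in> borel_measurable borel"
  shows "(\<integral>\<^sup>+x. h (- x) \<partial>lborel) = (\<integral>\<^sup>+x. h x \<partial>lborel)"
proof -
  have "(lborel :: 'a measure) = distr lborel borel uminus"
    using lborel_affine[of "-1" 0] by (simp add: density_1)
  then have "(\<integral>\<^sup>+x. h x \<partial>lborel) = (\<integral>\<^sup>+x. h x \<partial>distr lborel borel uminus)"
    by (rule arg_cong)
  also have "\<dots> = (\<integral>\<^sup>+x. h (- x) \<partial>lborel)"
    by (rule nn_integral_distr) auto
  finally show ?thesis
    by simp
qed

definition pos_scale_invariant :: "'a::real_vector set \<Rightarrow> bool" where
  "pos_scale_invariant K \<longleftrightarrow> (\<forall>c>0. \<forall>x. c *\<^sub>R x \<in> K \<longleftrightarrow> x \<in> K)"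

lemma pos_scale_invariantI:
  assumes "\<And>c x. 0 < c \<Longrightarrow> x \<in> K \<Longrightarrow> c *\<^sub>R x \<in> K"
  shows "pos_scale_invariant K"
  unfolding pos_scale_invariant_def
proof (intro allI impI iffI)
  fix c :: real and x assume "0 < c"
  show "x \<in> K" if "c *\<^sub>R x \<in> K"
    using assms[of "1 / c", OF _ that] \<open>0 < c\<close> by simp
  show "c *\<^sub>R x \<in> K" if "x \<in> K"
    using assms[OF \<open>0 < c\<close> that] .
qed

lemma pos_scale_invariant_image:
  assumes "pos_scale_invariant K" "0 < c"
  shows "(*\<^sub>R) c ` K = K"
proof
  show "(*\<^sub>R) c ` K \<subseteq> K"
    using assms by (auto simp: pos_scale_invariant_def)
  show "K \<subseteq> (*\<^sub>R) c ` K"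
  proof
    fix x assume "x \<in> K"
    then have "(1 / c) *\<^sub>R x \<in> K"
      using assms by (simp add: pos_scale_invariant_def)
    then show "x \<in> (*\<^sub>R) c ` K"
      using \<open>0 < c\<close> by (intro image_eqI[of _ _ "(1 / c) *\<^sub>R x"]) auto
  qed
qed

lemma pos_scale_invariant_interior:
  fixes K :: "'a::euclidean_space set"
  assumes "pos_scale_invariant K"
  shows "pos_scale_invariant (interior K)"
proof (rule pos_scale_invariantI)
  fix c :: real and x assume "0 < c" "x \<in> interior K"
  then have "c *\<^sub>R x \<in> interior ((*\<^sub>R) c ` K)"
    using interior_injective_linear_image[of "(*\<^sub>R) c" K] by (simp add: linear_scaleR inj_on_def)
  then show "c *\<^sub>R x \<in> interior K"
    using pos_scale_invariant_image[OF assms \<open>0 < c\<close>] by simp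
qed

lemma pos_scale_invariant_closure:
  fixes K :: "'a::real_normed_vector set"
  assumes "pos_scale_invariant K"
  shows "pos_scale_invariant (closure K)"
proof (rule pos_scale_invariantI)
  fix c :: real and x assume "0 < c" "x \<in> closure K"
  then have "c *\<^sub>R x \<in> closure ((*\<^sub>R) c ` K)"
    using closure_scaleR[of c K] by auto
  then show "c *\<^sub>R x \<in> closure K"
    using pos_scale_invariant_image[OF assms \<open>0 < c\<close>] by simp
qed

lemma pos_scale_invariant_vimage:
  assumes "linear g" "pos_scale_invariant K"
  shows "pos_scale_invariant (g -` K)"
  using assms by (simp add: pos_scale_invariant_def linear_cmul)

lemma pos_scale_invariant_halfspace: "pos_scale_invariant {x::'a::real_inner. 0 < x \<bullet> p}"
  by (simp add: pos_scale_invariant_def zero_less_mult_iff)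

lemma emeasure_scale_invariant_Int_cball:
  fixes K :: "'a::euclidean_space set"
  assumes [measurable]: "K \<in> sets borel" and K: "pos_scale_invariant K" and t: "0 < t"
  shows "emeasure lborel (K \<inter> cball 0 t) = ennreal (t ^ DIM('a)) * emeasure lborel (K \<inter> cball 0 1)"
proof -
  let ?D = "density (distr lborel borel ((*\<^sub>R) t :: 'a \<Rightarrow> 'a)) (\<lambda>_. ennreal (t ^ DIM('a)))"
  have "lborel = ?D"
    using lborel_affine[of t "0::'a"] t by simp
  then have "emeasure lborel (K \<inter> cball 0 t) = emeasure ?D (K \<inter> cball 0 t)"
    by simp
  also have "\<dots> = ennreal (t ^ DIM('a)) * emeasure (distr lborel borel ((*\<^sub>R) t)) (K \<inter> cball 0 t)"
    by (simp add: emeasure_density nn_integral_cmult_indicator)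
  also have "(*\<^sub>R) t -` (K \<inter> cball 0 t) = K \<inter> cball 0 1"
    using t K by (auto simp: pos_scale_invariant_def)
  then have "emeasure (distr lborel borel ((*\<^sub>R) t)) (K \<inter> cball 0 t) = emeasure lborel (K \<inter> cball 0 1)"
    by (subst emeasure_distr) auto
  finally show ?thesis .
qed

definition gauss_measure :: "'a::euclidean_space set \<Rightarrow> ennreal" where
  "gauss_measure K = (\<integral>\<^sup>+y. indicator K y * ennreal (exp (- (norm y ^ 2))) \<partial>lborel)"

text \<open>The factor produced by polar coordinates in \<open>gauss_measure_scale_invariant\<close>; it equals
  \<open>Gamma (d / 2 + 1)\<close>, and only its positivity and finiteness are needed.\<close>
definition gauss_radial_const :: "nat \<Rightarrow> ennreal" where
  "gauss_radial_const d = (\<integral>\<^sup>+t. ennreal (2 * t ^ (d + 1) * exp (- (t ^ 2))) * indicator {0..} t \<partial>lborel)"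

lemma ennreal_exp_neg_square_eq_nn_integral:
  fixes a :: real
  assumes "0 \<le> a"
  shows "ennreal (exp (- (a ^ 2))) = (\<integral>\<^sup>+t. ennreal (2 * t * exp (- (t ^ 2))) * indicator {a..} t \<partial>lborel)"
proof -
  have "filterlim (\<lambda>t::real. t ^ 2) at_top at_top"
    by (intro filterlim_pow_at_top filterlim_ident) auto
  then have "((\<lambda>t::real. exp (- (t ^ 2))) \<longlongrightarrow> 0) at_top"
    by (intro filterlim_compose[OF exp_at_bot]) (simp add: filterlim_uminus_at_bot)
  then have "(\<integral>\<^sup>+t. ennreal (2 * t * exp (- (t ^ 2))) * indicator {a..} t \<partial>lborel) = ennreal (0 - (- exp (- (a ^ 2))))"
    using assms
    by (intro nn_integral_FTC_atLeast)
       (auto intro!: derivative_eq_intros tendsto_minus_cancel_left[THEN iffD1] simp: power2_eq_square)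
  then show ?thesis
    by simp
qed

lemma gauss_measure_scale_invariant:
  fixes K :: "'a::euclidean_space set"
  assumes [measurable]: "K \<in> sets borel" and K: "pos_scale_invariant K"
  shows "gauss_measure K = gauss_radial_const DIM('a) * emeasure lborel (K \<inter> cball 0 1)"
proof -
  let ?d = "DIM('a)" and ?\<mu> = "emeasure lborel (K \<inter> cball 0 1)"
  let ?w = "\<lambda>t::real. ennreal (2 * t * exp (- (t ^ 2)))"
  have ball_weight: "?w t * emeasure lborel (K \<inter> cball 0 t)
      = ennreal (2 * t ^ (?d + 1) * exp (- (t ^ 2))) * indicator {0..} t * ?\<mu>" for t
  proof (cases "0 < t")
    case True
    have "?w t * emeasure lborel (K \<inter> cball 0 t) = (?w t * ennreal (t ^ ?d)) * ?\<mu>"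
      by (simp only: emeasure_scale_invariant_Int_cball[OF assms(1) K True] mult.assoc)
    also have "?w t * ennreal (t ^ ?d) = ennreal (2 * t * exp (- (t ^ 2)) * t ^ ?d)"
      using True by (intro ennreal_mult[symmetric]) auto
    also have "2 * t * exp (- (t ^ 2)) * t ^ ?d = 2 * t ^ (?d + 1) * exp (- (t ^ 2))"
      by (simp add: power_Suc)
    finally show ?thesis
      using True by simp
  next
    case False
    show ?thesis
    proof (cases "t = 0")
      case True
      have "emeasure lborel (K \<inter> cball 0 t) \<le> emeasure lborel {0::'a}"
        using True by (intro emeasure_mono) auto
      then show ?thesis
        using True by simp
    qed (use False in \<open>simp add: ennreal_neg\<close>)
  qed
  have "gauss_measure K
      = (\<integral>\<^sup>+y. (\<integral>\<^sup>+t. indicator K y * (?w t * indicator {norm y..} t) \<partial>lborel) \<partial>lborel)"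
    unfolding gauss_measure_def
    by (subst nn_integral_cmult) (auto simp: ennreal_exp_neg_square_eq_nn_integral)
  also have "\<dots> = (\<integral>\<^sup>+t. (\<integral>\<^sup>+y. indicator K y * (?w t * indicator {norm y..} t) \<partial>lborel) \<partial>lborel)"
  proof (rule lborel_pair.Fubini'[symmetric])
    have "(\<lambda>p. indicator K (fst p) * (?w (snd p) * indicator {p::'a \<times> real. norm (fst p) \<le> snd p} p))
        \<in> borel_measurable (lborel \<Otimes>\<^sub>M lborel)"
      by measurable
    then show "(\<lambda>(y, t). indicator K y * (?w t * indicator {norm y..} t)) \<in> borel_measurable (lborel \<Otimes>\<^sub>M lborel)"
      by (rule measurable_cong[THEN iffD1, rotated]) (auto split: split_indicator)
  qed
  also have "\<dots> = (\<integral>\<^sup>+t. ?w t * emeasure lborel (K \<inter> cball 0 t) \<partial>lborel)"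
  proof (rule nn_integral_cong)
    fix t :: real
    have "(\<lambda>y. indicator K y * (?w t * indicator {norm y..} t)) = (\<lambda>y. ?w t * indicator (K \<inter> cball 0 t) y)"
      by (simp add: fun_eq_iff indicator_def)
    then show "(\<integral>\<^sup>+y. indicator K y * (?w t * indicator {norm y..} t) \<partial>lborel) = ?w t * emeasure lborel (K \<inter> cball 0 t)"
      by (simp add: nn_integral_cmult_indicator)
  qed
  also have "\<dots> = (\<integral>\<^sup>+t. ennreal (2 * t ^ (?d + 1) * exp (- (t ^ 2))) * indicator {0..} t * ?\<mu> \<partial>lborel)"
    by (simp only: ball_weight)
  also have "\<dots> = gauss_radial_const ?d * ?\<mu>"
    unfolding gauss_radial_const_def by (rule nn_integral_multc) measurable
  finally show ?thesis .
qed

lemma gauss_radial_const_pos_finite: "0 < gauss_radial_const d" "gauss_radial_const d < \<infinity>"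
proof -
  let ?F = "\<lambda>x::real. indicator {0..} x *\<^sub>R (exp (- x\<^sup>2) * x ^ (d + 1))"
  obtain v where "0 < v" and F: "has_bochner_integral lborel ?F v"
  proof (cases "even (d + 1)")
    case True
    then obtain k where "d + 1 = 2 * k" by blast
    then show ?thesis
      using gaussian_moment_even_pos[of k] that[of "sqrt pi / 2 * (fact (2 * k) / (2 ^ (2 * k) * fact k))"]
      by simp
  next
    case False
    then obtain k where "d + 1 = 2 * k + 1" using oddE by blast
    then show ?thesis
      using gaussian_moment_odd_pos[of k] that[of "fact k / 2"] by simp
  qed
  have "(\<integral>\<^sup>+x. ennreal (?F x) \<partial>lborel) = ennreal v"
    using F nn_integral_eq_integral[of lborel ?F] by (simp add: has_bochner_integral_iff indicator_def)
  moreover have "gauss_radial_const d = (\<integral>\<^sup>+x. 2 * ennreal (?F x) \<partial>lborel)"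
    unfolding gauss_radial_const_def
    by (intro nn_integral_cong) (auto simp: ennreal_mult' mult_ac split: split_indicator)
  ultimately have "gauss_radial_const d = ennreal (2 * v)"
    using \<open>0 < v\<close> by (simp add: nn_integral_cmult ennreal_mult)
  then show "0 < gauss_radial_const d" "gauss_radial_const d < \<infinity>"
    using \<open>0 < v\<close> by auto
qed

lemma unit_inner_bounds:
  fixes x y :: "'a::euclidean_space"
  assumes "norm x = 1" "norm y = 1"
  shows "-1 \<le> x \<bullet> y" "x \<bullet> y \<le> 1"
  using Cauchy_Schwarz_ineq2[of x y] assms by auto

lemma sin_squares_add: "sin (a :: real) ^ 2 + sin b ^ 2 + 2 * sin a * sin b * cos (a + b) = sin (a + b) ^ 2"
  using sin_cos_squared_add[of a] sin_cos_squared_add[of b]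
  unfolding sin_add cos_add by algebra

text \<open>The distance condition gives \<open>\<gamma> t\<close> the inner products \<open>cos (t d)\<close> and \<open>cos ((1 - t) d)\<close>
  with the endpoints; then both sides have squared length \<open>sin d ^ 2\<close> and inner product
  \<open>sin d ^ 2\<close> with each other, so they coincide.\<close>
lemma min_geodesic_great_circle:
  fixes u1 u2 :: "'a::euclidean_space"
  assumes u: "norm u1 = 1" "norm u2 = 1" and \<gamma>: "min_geodesic \<gamma> u1 u2"
    and t: "0 \<le> t" "t \<le> 1" and d: "d = arccos (u1 \<bullet> u2)"
  shows "sin d *\<^sub>R \<gamma> t = sin ((1 - t) * d) *\<^sub>R u1 + sin (t * d) *\<^sub>R u2"
proof -
  define v where "v = sin ((1 - t) * d) *\<^sub>R u1 + sin (t * d) *\<^sub>R u2"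
  have uu: "u1 \<bullet> u1 = 1" "u2 \<bullet> u2 = 1"
    using u by (simp_all add: dot_square_norm)
  have \<gamma>_ends: "\<gamma> 0 = u1" "\<gamma> 1 = u2" and \<gamma>t: "norm (\<gamma> t) = 1"
    and dist: "\<And>s r. s \<in> {0..1} \<Longrightarrow> r \<in> {0..1} \<Longrightarrow> sph_dist (\<gamma> s) (\<gamma> r) = \<bar>s - r\<bar> * d"
    using \<gamma> t unfolding min_geodesic_def sph_dist_def d by auto
  have "arccos (u1 \<bullet> \<gamma> t) = t * d"
    using dist[of 0 t] t \<gamma>_ends unfolding sph_dist_def by simp
  then have c1: "u1 \<bullet> \<gamma> t = cos (t * d)"
    using unit_inner_bounds[OF u(1) \<gamma>t] by (metis cos_arccos)
  have "arccos (\<gamma> t \<bullet> u2) = (1 - t) * d"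
    using dist[of t 1] t \<gamma>_ends unfolding sph_dist_def by simp
  then have c2: "\<gamma> t \<bullet> u2 = cos ((1 - t) * d)"
    using unit_inner_bounds[OF \<gamma>t u(2)] by (metis cos_arccos)
  have c0: "u1 \<bullet> u2 = cos d"
    using unit_inner_bounds[OF u] d by simp
  have d_split: "(1 - t) * d + t * d = d"
    by (simp add: algebra_simps)
  have "\<gamma> t \<bullet> v = sin ((1 - t) * d + t * d)"
    unfolding v_def sin_add using c1 c2 by (simp add: inner_add_right inner_commute)
  then have \<gamma>v: "\<gamma> t \<bullet> v = sin d"
    by (simp only: d_split)
  have "v \<bullet> v = sin ((1 - t) * d) ^ 2 + sin (t * d) ^ 2 + 2 * sin ((1 - t) * d) * sin (t * d) * cos d"
    unfolding v_def using uu c0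
    by (simp add: inner_add_left inner_add_right inner_commute power2_eq_square algebra_simps)
  also have "\<dots> = sin d ^ 2"
    using sin_squares_add[of "(1 - t) * d" "t * d"] by (simp only: d_split)
  finally have vv: "v \<bullet> v = sin d ^ 2" .
  have "\<gamma> t \<bullet> \<gamma> t = 1"
    using \<gamma>t by (simp add: dot_square_norm)
  then have "(sin d *\<^sub>R \<gamma> t - v) \<bullet> (sin d *\<^sub>R \<gamma> t - v) = 0"
    using \<gamma>v vv by (simp add: inner_diff_left inner_diff_right inner_commute power2_eq_square)
  then show ?thesis
    unfolding v_def by simp
qed

text \<open>The ray crosses the geodesic from \<open>u1\<close> to \<open>u2\<close> (intermediate value theorem along the
  great-circle arc); positivity on \<open>p\<close> rules out antipodal endpoints.\<close>
lemma geod_convex_pos_combination: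
  fixes X :: "'a::euclidean_space set"
  assumes X: "geod_convex X" and pos: "\<And>x. x \<in> X \<Longrightarrow> 0 < x \<bullet> p"
    and u: "u1 \<in> X" "u2 \<in> X" and \<alpha>\<beta>: "0 < \<alpha>" "0 < \<beta>"
  shows "\<exists>l>0. \<exists>w\<in>X. \<alpha> *\<^sub>R u1 + \<beta> *\<^sub>R u2 = l *\<^sub>R w"
proof -
  have n: "norm u1 = 1" "norm u2 = 1"
    using X u unfolding geod_convex_def by auto
  obtain \<gamma> where \<gamma>: "min_geodesic \<gamma> u1 u2" and \<gamma>X: "\<gamma> ` {0..1} \<subseteq> X"
    using X u unfolding geod_convex_def by blast
  have uu: "u1 \<bullet> u1 = 1" "u2 \<bullet> u2 = 1"
    using n by (simp_all add: dot_square_norm)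
  define d where "d = arccos (u1 \<bullet> u2)"
  consider "u1 \<bullet> u2 = 1" | "u1 \<bullet> u2 = -1" | "-1 < u1 \<bullet> u2" "u1 \<bullet> u2 < 1"
    using unit_inner_bounds[OF n] by linarith
  then show ?thesis
  proof cases
    case 1
    then have "(u1 - u2) \<bullet> (u1 - u2) = 0"
      using uu by (simp add: inner_diff_left inner_diff_right inner_commute)
    then have "u1 = u2"
      by simp
    then have "\<alpha> *\<^sub>R u1 + \<beta> *\<^sub>R u2 = (\<alpha> + \<beta>) *\<^sub>R u1"
      by (simp add: scaleR_add_left)
    then show ?thesis
      using \<alpha>\<beta> u by (intro exI[of _ "\<alpha> + \<beta>"]) auto
  next
    case 2
    then have "(u1 + u2) \<bullet> (u1 + u2) = 0"
      using uu by (simp add: inner_add_left inner_add_right inner_commute)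
    then have "u2 = - u1"
      by (simp add: add_eq_0_iff)
    then show ?thesis
      using pos[OF u(1)] pos[OF u(2)] by simp
  next
    case 3
    then have d: "0 < d" "d < pi"
      using arccos_lt_bounded[of "u1 \<bullet> u2"] unfolding d_def by auto
    define \<phi> where "\<phi> t = \<alpha> * sin (t * d) - \<beta> * sin ((1 - t) * d)" for t
    have "continuous_on {0..1} \<phi>" "\<phi> 0 \<le> 0" "0 \<le> \<phi> 1"
      unfolding \<phi>_def using \<alpha>\<beta> sin_gt_zero[OF d] by (auto intro!: continuous_intros)
    then obtain t where t: "0 \<le> t" "t \<le> 1" "\<phi> t = 0"
      using IVT'[of \<phi> 0 0 1] by auto
    have "t \<noteq> 1"
      using t(3) d \<alpha>\<beta> sin_gt_zero[of d] unfolding \<phi>_def by auto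
    then have "0 < (1 - t) * d"
      using t d by simp
    moreover have "(1 - t) * d \<le> 1 * d"
      using t d by (intro mult_right_mono) auto
    then have "(1 - t) * d < pi"
      using d by linarith
    ultimately have s: "0 < sin ((1 - t) * d)"
      by (rule sin_gt_zero)
    have "\<alpha> *\<^sub>R u1 + \<beta> *\<^sub>R u2 = (\<alpha> / sin ((1 - t) * d)) *\<^sub>R (sin ((1 - t) * d) *\<^sub>R u1 + sin (t * d) *\<^sub>R u2)"
      using t(3) s unfolding \<phi>_def by (simp add: scaleR_add_right field_simps)
    also have "\<dots> = (\<alpha> * sin d / sin ((1 - t) * d)) *\<^sub>R \<gamma> t"
      unfolding min_geodesic_great_circle[OF n \<gamma> t(1,2) d_def, symmetric] by simp
    finally show ?thesis
      using \<gamma>X t \<alpha>\<beta> s d sin_gt_zero[of d] by (intro exI[of _ "\<alpha> * sin d / sin ((1 - t) * d)"]) auto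
  qed
qed

definition pos_cone :: "'a::real_vector set \<Rightarrow> 'a set" where
  "pos_cone A = {c *\<^sub>R a | c a. 0 < c \<and> a \<in> A}"

lemma pos_scale_invariant_pos_cone: "pos_scale_invariant (pos_cone A)"
proof (rule pos_scale_invariantI)
  fix c :: real and x assume "0 < c" "x \<in> pos_cone A"
  then obtain b a where "x = b *\<^sub>R a" "0 < b" "a \<in> A"
    unfolding pos_cone_def by blast
  with \<open>0 < c\<close> show "c *\<^sub>R x \<in> pos_cone A"
    unfolding pos_cone_def by (intro CollectI exI[of _ "c * b"] exI[of _ a]) simp
qed

lemma convex_pos_cone_geod_convex:
  fixes X :: "'a::euclidean_space set"
  assumes X: "geod_convex X" and pos: "\<And>x. x \<in> X \<Longrightarrow> 0 < x \<bullet> p"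
  shows "convex (pos_cone X)"
proof (rule convexI)
  fix x y :: 'a and u v :: real
  assume "x \<in> pos_cone X" "y \<in> pos_cone X" and uv: "0 \<le> u" "0 \<le> v" "u + v = 1"
  then obtain a b x' y' where xy: "x = a *\<^sub>R x'" "y = b *\<^sub>R y'" "0 < a" "0 < b" "x' \<in> X" "y' \<in> X"
    unfolding pos_cone_def by auto
  show "u *\<^sub>R x + v *\<^sub>R y \<in> pos_cone X"
  proof (cases "u = 0 \<or> v = 0")
    case True
    then show ?thesis
      using uv \<open>x \<in> pos_cone X\<close> \<open>y \<in> pos_cone X\<close> by auto
  next
    case False
    then have "0 < u * a" "0 < v * b"
      using uv xy by simp_all
    then obtain l w where "0 < l" "w \<in> X" "(u * a) *\<^sub>R x' + (v * b) *\<^sub>R y' = l *\<^sub>R w"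
      using geod_convex_pos_combination[OF X pos xy(5,6)] by blast
    then show ?thesis
      unfolding pos_cone_def using xy by auto
  qed
qed

lemma pos_cone_unit_halfspace:
  fixes p :: "'a::real_inner"
  shows "pos_cone {x. norm x = 1 \<and> 0 < x \<bullet> p} = {x. 0 < x \<bullet> p}"
proof
  show "pos_cone {x. norm x = 1 \<and> 0 < x \<bullet> p} \<subseteq> {x. 0 < x \<bullet> p}"
    unfolding pos_cone_def by auto
  show "{x. 0 < x \<bullet> p} \<subseteq> pos_cone {x. norm x = 1 \<and> 0 < x \<bullet> p}"
  proof
    fix x assume x: "x \<in> {x. 0 < x \<bullet> p}"
    then have "0 < norm x"
      by auto
    then show "x \<in> pos_cone {x. norm x = 1 \<and> 0 < x \<bullet> p}"
      unfolding pos_cone_def using x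
      by (intro CollectI exI[of _ "norm x"] exI[of _ "x /\<^sub>R norm x"]) auto
  qed
qed

lemma measure_sph_cone:
  fixes A :: "'a::euclidean_space set"
  assumes A: "A \<subseteq> sphere 0 1" and "convex (pos_cone A)"
  shows "measure lebesgue (sph_cone A) = measure lebesgue (pos_cone A \<inter> cball 0 1)"
proof (rule measure_negligible_symdiff)
  show "pos_cone A \<inter> cball 0 1 \<in> lmeasurable"
    using \<open>convex (pos_cone A)\<close> by (intro measurable_convex convex_Int bounded_Int) auto
  have "sph_cone A - {0} = pos_cone A \<inter> cball 0 1 - {0}"
    using A unfolding sph_cone_def pos_cone_def
    by (auto 0 3 simp: subset_iff less_le)
  then show "negligible (pos_cone A \<inter> cball 0 1 - sph_cone A \<union> (sph_cone A - pos_cone A \<inter> cball 0 1))"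
    by (intro negligible_subset[OF negligible_sing]) blast
qed

lemma measure_sph_cone_hemisphere:
  fixes p :: "'a::euclidean_space"
  shows "measure lebesgue (sph_cone {x. norm x = 1 \<and> 0 < x \<bullet> p})
       = measure lebesgue ({x. 0 < x \<bullet> p} \<inter> cball 0 1)"
proof -
  have "convex {x. 0 < x \<bullet> p}"
    using convex_halfspace_gt[of 0 p] by (simp add: inner_commute)
  moreover have "{x. norm x = 1 \<and> 0 < x \<bullet> p} \<subseteq> sphere 0 1"
    by auto
  ultimately show ?thesis
    using measure_sph_cone[of "{x. norm x = 1 \<and> 0 < x \<bullet> p}"] by (simp add: pos_cone_unit_halfspace)
qed

locale linear_isometry =
  fixes f :: "'a::euclidean_space \<Rightarrow> 'b::euclidean_space"
  assumes linear: "linear f" and norm_preserving: "norm (f x) = norm x"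
begin

lemma inner_preserving: "f x \<bullet> f y = x \<bullet> y"
  using norm_preserving[of "x + y"] norm_preserving[of x] norm_preserving[of y]
  by (simp add: dot_norm linear_add[OF linear])

lemma adjoint_left_inverse [simp]: "adjoint f (f x) = x"
proof -
  have "y \<bullet> adjoint f (f x) = y \<bullet> x" for y
    using adjoint_works[OF linear, of y "f x"] inner_preserving[of y x] by simp
  from this[of "adjoint f (f x) - x"] have "(adjoint f (f x) - x) \<bullet> (adjoint f (f x) - x) = 0"
    by (simp only: inner_diff_right)
  then show ?thesis
    by simp
qed

lemma linear_adjoint: "linear (adjoint f)"
  using adjoint_linear[OF linear] .

lemma measurable_adjoint [measurable]: "adjoint f \<in> borel_measurable borel"
  and measurable_map [measurable]: "f \<in> borel_measurable borel"
  using linear_adjoint linear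
  by (simp_all add: linear_conv_bounded_linear borel_measurable_continuous_onI linear_continuous_on)

lemma orthogonal_range_adjoint_residual: "f y \<bullet> (z - f (adjoint f z)) = 0"
  by (simp add: inner_diff_right adjoint_works[OF linear, symmetric])

lemma norm_split_adjoint:
  "norm z ^ 2 = norm (adjoint f z) ^ 2 + norm (z - f (adjoint f z)) ^ 2"
proof -
  have "norm z ^ 2 = norm (f (adjoint f z) + (z - f (adjoint f z))) ^ 2"
    by simp
  also have "\<dots> = norm (f (adjoint f z)) ^ 2 + norm (z - f (adjoint f z)) ^ 2"
    by (rule norm_add_Pythagorean) (simp add: orthogonal_def orthogonal_range_adjoint_residual)
  finally show ?thesis
    by (simp add: norm_preserving)
qed

lemma norm_residual_add:
  "norm (z - f (adjoint f z) + f x) ^ 2 = norm (z - f (adjoint f z)) ^ 2 + norm x ^ 2"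
  using norm_add_Pythagorean[of "z - f (adjoint f z)" "f x"] orthogonal_range_adjoint_residual[of x]
  by (simp add: orthogonal_def inner_commute norm_preserving)

text \<open>The shear \<open>(x, z) \<mapsto> (adjoint f z - x, z - f (adjoint f z) + f x)\<close> of \<open>'a \<times> 'b\<close> is a
  composition of fibrewise translations and \<open>x \<mapsto> -x\<close>, hence preserves Lebesgue measure.\<close>
lemma nn_integral_shear:
  assumes \<Psi>: "(\<lambda>(x, z). \<Psi> x z) \<in> borel_measurable (borel \<Otimes>\<^sub>M borel)"
  shows "(\<integral>\<^sup>+x. (\<integral>\<^sup>+z. \<Psi> (adjoint f z - x) (z - f (adjoint f z) + f x) \<partial>lborel) \<partial>lborel)
       = (\<integral>\<^sup>+x. (\<integral>\<^sup>+z. \<Psi> x z \<partial>lborel) \<partial>lborel)"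
proof -
  have [measurable]: "(\<lambda>p. \<Psi> (a p) (b p)) \<in> borel_measurable M"
    if [measurable]: "a \<in> borel_measurable M" "b \<in> borel_measurable M" for a b and M :: "'c measure"
    using measurable_compose[OF measurable_Pair[OF that] \<Psi>] by simp
  have "(\<integral>\<^sup>+x. (\<integral>\<^sup>+z. \<Psi> (adjoint f z - x) (z - f (adjoint f z) + f x) \<partial>lborel) \<partial>lborel)
      = (\<integral>\<^sup>+z. (\<integral>\<^sup>+x. \<Psi> (adjoint f z - x) (z - f (adjoint f z) + f x) \<partial>lborel) \<partial>lborel)"
    by (rule lborel_pair.Fubini') measurable
  also have "\<dots> = (\<integral>\<^sup>+z. (\<integral>\<^sup>+x. \<Psi> (- x) (z + f x) \<partial>lborel) \<partial>lborel)"
  proof (rule nn_integral_cong)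
    fix z
    have "(\<integral>\<^sup>+x. \<Psi> (- x) (z + f x) \<partial>lborel) = (\<integral>\<^sup>+x. \<Psi> (- (x + - adjoint f z)) (z + f (x + - adjoint f z)) \<partial>lborel)"
      by (rule nn_integral_lborel_translate[symmetric]) measurable
    then show "(\<integral>\<^sup>+x. \<Psi> (adjoint f z - x) (z - f (adjoint f z) + f x) \<partial>lborel) = (\<integral>\<^sup>+x. \<Psi> (- x) (z + f x) \<partial>lborel)"
      by (simp add: linear_diff[OF linear] linear_add[OF linear] linear_neg[OF linear] algebra_simps)
  qed
  also have "\<dots> = (\<integral>\<^sup>+x. (\<integral>\<^sup>+z. \<Psi> (- x) (z + f x) \<partial>lborel) \<partial>lborel)"
    by (rule lborel_pair.Fubini'[symmetric]) measurable
  also have "\<dots> = (\<integral>\<^sup>+x. (\<integral>\<^sup>+z. \<Psi> (- x) z \<partial>lborel) \<partial>lborel)"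
    by (intro nn_integral_cong nn_integral_lborel_translate) measurable
  also have "\<dots> = (\<integral>\<^sup>+x. (\<integral>\<^sup>+z. \<Psi> x z \<partial>lborel) \<partial>lborel)"
    by (rule nn_integral_lborel_uminus) measurable
  finally show ?thesis .
qed

text \<open>After translating \<open>z\<close> by \<open>f x\<close>, Pythagoras across \<open>range f\<close> and its orthogonal complement
  turns the product of the two Gaussian integrals into the sheared one of \<open>nn_integral_shear\<close>.\<close>
lemma gauss_measure_vimage_adjoint:
  assumes [measurable]: "K \<in> sets borel"
  shows "gauss_measure (adjoint f -` K) * gauss_measure (UNIV :: 'a set)
       = gauss_measure K * gauss_measure (UNIV :: 'b set)"
proof -
  define \<Psi> where "\<Psi> y w = indicator K y * ennreal (exp (- (norm y ^ 2 + norm w ^ 2)))" for y :: 'a and w :: 'b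
  have [measurable]: "(\<lambda>(y, w). \<Psi> y w) \<in> borel_measurable (borel \<Otimes>\<^sub>M borel)"
    unfolding \<Psi>_def by measurable
  have exp_split: "ennreal (exp (- a - b)) = ennreal (exp (- a)) * ennreal (exp (- b))" for a b :: real
    by (simp add: ennreal_mult[symmetric] exp_add[symmetric])
  have "gauss_measure (adjoint f -` K) * gauss_measure (UNIV :: 'a set)
      = (\<integral>\<^sup>+x. (\<integral>\<^sup>+z. indicator K (adjoint f z) * ennreal (exp (- (norm z ^ 2 + norm (x :: 'a) ^ 2))) \<partial>lborel) \<partial>lborel)"
    unfolding gauss_measure_def
    by (simp add: nn_integral_cmult[symmetric] nn_integral_multc[symmetric] exp_split indicator_vimage mult.assoc)
  also have "\<dots> = (\<integral>\<^sup>+x. (\<integral>\<^sup>+z. \<Psi> (adjoint f z - x) (z - f (adjoint f z) + f x) \<partial>lborel) \<partial>lborel)"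
  proof (rule nn_integral_cong)
    fix x
    have "norm (z - f x) ^ 2 + norm x ^ 2
        = norm (adjoint f z - x) ^ 2 + norm (z - f (adjoint f z) + f x) ^ 2" for z
      using norm_split_adjoint[of "z - f x"] norm_residual_add[of z x]
      by (simp add: linear_diff[OF linear] linear_diff[OF linear_adjoint])
    then have "(\<integral>\<^sup>+z. \<Psi> (adjoint f z - x) (z - f (adjoint f z) + f x) \<partial>lborel)
        = (\<integral>\<^sup>+z. indicator K (adjoint f (z + - f x)) * ennreal (exp (- (norm (z + - f x) ^ 2 + norm x ^ 2))) \<partial>lborel)"
      by (simp add: \<Psi>_def linear_diff[OF linear_adjoint])
    also have "\<dots> = (\<integral>\<^sup>+z. indicator K (adjoint f z) * ennreal (exp (- (norm z ^ 2 + norm x ^ 2))) \<partial>lborel)"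
      by (rule nn_integral_lborel_translate) measurable
    finally show "(\<integral>\<^sup>+z. indicator K (adjoint f z) * ennreal (exp (- (norm z ^ 2 + norm x ^ 2))) \<partial>lborel)
        = (\<integral>\<^sup>+z. \<Psi> (adjoint f z - x) (z - f (adjoint f z) + f x) \<partial>lborel)" ..
  qed
  also have "\<dots> = (\<integral>\<^sup>+x. (\<integral>\<^sup>+z. \<Psi> x z \<partial>lborel) \<partial>lborel)"
    by (rule nn_integral_shear) measurable
  also have "\<dots> = gauss_measure K * gauss_measure (UNIV :: 'b set)"
    unfolding gauss_measure_def \<Psi>_def
    by (simp add: nn_integral_cmult nn_integral_multc[symmetric] exp_split indicator_vimage mult.assoc)
  finally show ?thesis .
qed

lemma emeasure_vimage_adjoint_Int_cball:
  assumes [measurable]: "K \<in> sets borel" and K: "pos_scale_invariant K"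
  shows "emeasure lborel (adjoint f -` K \<inter> cball 0 1) * emeasure lborel (cball (0 :: 'a) 1)
       = emeasure lborel (K \<inter> cball 0 1) * emeasure lborel (cball (0 :: 'b) 1)"
proof -
  let ?c = "gauss_radial_const DIM('a) * gauss_radial_const DIM('b)"
  have gauss_UNIV: "gauss_measure (UNIV :: 'c::euclidean_space set)
      = gauss_radial_const DIM('c) * emeasure lborel (cball (0 :: 'c) 1)"
    using gauss_measure_scale_invariant[of "UNIV :: 'c set"] by (simp add: pos_scale_invariant_def)
  have "adjoint f -` K \<in> sets borel"
    using measurable_sets[OF measurable_adjoint assms(1)] by simp
  then have "gauss_measure (adjoint f -` K) = gauss_radial_const DIM('b) * emeasure lborel (adjoint f -` K \<inter> cball 0 1)"
    by (rule gauss_measure_scale_invariant[OF _ pos_scale_invariant_vimage[OF linear_adjoint K]])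
  moreover have "gauss_measure K = gauss_radial_const DIM('a) * emeasure lborel (K \<inter> cball 0 1)"
    by (rule gauss_measure_scale_invariant[OF assms])
  ultimately have "?c * (emeasure lborel (adjoint f -` K \<inter> cball 0 1) * emeasure lborel (cball (0 :: 'a) 1))
      = ?c * (emeasure lborel (K \<inter> cball 0 1) * emeasure lborel (cball (0 :: 'b) 1))"
    using gauss_measure_vimage_adjoint[OF assms(1)] by (simp only: gauss_UNIV ac_simps)
  moreover have "?c \<noteq> 0" "?c \<noteq> \<infinity>"
    using gauss_radial_const_pos_finite[of "DIM('a)"] gauss_radial_const_pos_finite[of "DIM('b)"]
    by (auto simp: ennreal_mult_eq_top_iff)
  ultimately show ?thesis
    by (simp add: ennreal_mult_cancel_left)
qed

lemma measure_vimage_adjoint_Int_cball: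
  assumes K: "K \<in> sets borel" "pos_scale_invariant K"
  shows "measure lebesgue (adjoint f -` K \<inter> cball 0 1) * measure lebesgue (cball (0 :: 'a) 1)
       = measure lebesgue (K \<inter> cball 0 1) * measure lebesgue (cball (0 :: 'b) 1)"
proof -
  have "adjoint f -` K \<inter> cball 0 1 \<in> sets lborel" "K \<inter> cball 0 1 \<in> sets lborel"
    using measurable_sets[OF measurable_adjoint K(1)] K(1) by auto
  then show ?thesis
    using arg_cong[OF emeasure_vimage_adjoint_Int_cball[OF K], of enn2real]
    by (simp add: enn2real_mult measure_def[symmetric])
qed

text \<open>Convex sets need not be Borel; they are squeezed between their interior and closure,
  which differ from them by a null set.\<close>
lemma measure_vimage_adjoint_convex_cone:
  assumes C: "convex C" "pos_scale_invariant C"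
  shows "measure lebesgue (adjoint f -` C \<inter> cball 0 1)
       = measure lebesgue (cball (0 :: 'b) 1) / measure lebesgue (cball (0 :: 'a) 1)
         * measure lebesgue (C \<inter> cball 0 1)"
proof -
  let ?m = "\<lambda>S. measure lebesgue (S \<inter> cball (0 :: 'a) 1)"
  and ?m' = "\<lambda>S. measure lebesgue (adjoint f -` S \<inter> cball (0 :: 'b) 1)"
  have measurable: "S \<inter> cball 0 1 \<in> lmeasurable" "adjoint f -` S \<inter> cball 0 1 \<in> lmeasurable"
    if "convex S" for S :: "'a set"
    using that by (auto intro!: measurable_convex convex_Int convex_linear_vimage linear_adjoint bounded_Int)
  have m'_eq: "?m' S * measure lebesgue (cball (0 :: 'a) 1) = ?m C * measure lebesgue (cball (0 :: 'b) 1)"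
    if "S = interior C \<or> S = closure C" for S
  proof -
    have "S \<in> sets borel" "pos_scale_invariant S"
      using that C by (auto simp: pos_scale_invariant_interior pos_scale_invariant_closure)
    then have "?m' S * measure lebesgue (cball (0 :: 'a) 1) = ?m S * measure lebesgue (cball (0 :: 'b) 1)"
      by (rule measure_vimage_adjoint_Int_cball)
    moreover have "?m S = ?m C"
    proof (rule measure_negligible_symdiff[OF measurable(1)[OF C(1)]])
      show "negligible (C \<inter> cball 0 1 - S \<inter> cball 0 1 \<union> (S \<inter> cball 0 1 - C \<inter> cball 0 1))"
        using that interior_subset[of C] closure_subset[of C]
        by (intro negligible_subset[OF negligible_convex_frontier[OF C(1)]]) (auto simp: frontier_def)
    qed
    ultimately show ?thesis
      by simp
  qed
  have "?m' (interior C) \<le> ?m' C"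
    using interior_subset[of C]
    by (intro measure_mono_fmeasurable fmeasurableD measurable(2) convex_interior C(1)) auto
  moreover have "?m' C \<le> ?m' (closure C)"
    using closure_subset[of C]
    by (intro measure_mono_fmeasurable fmeasurableD measurable(2) convex_closure C(1)) auto
  moreover have "?m' (interior C) = ?m' (closure C)"
  proof -
    have "?m' (interior C) * measure lebesgue (cball (0 :: 'a) 1) = ?m' (closure C) * measure lebesgue (cball (0 :: 'a) 1)"
      using m'_eq[of "interior C"] m'_eq[of "closure C"] by simp
    then show ?thesis
      using content_cball_pos[of 1 "0 :: 'a"] by simp
  qed
  ultimately have "?m' C = ?m' (closure C)"
    by linarith
  then show ?thesis
    using m'_eq[of "closure C"] content_cball_pos[of 1 "0 :: 'a"] by (simp add: eq_divide_eq mult.commute)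
qed

lemma map_adjoint_on_range: "z \<in> range f \<Longrightarrow> f (adjoint f z) = z"
  by auto

lemma adjoint_eq_0_iff: "adjoint f v = 0 \<longleftrightarrow> (\<forall>e\<in>range f. v \<bullet> e = 0)"
proof -
  have "adjoint f v = 0 \<longleftrightarrow> (\<forall>y. y \<bullet> adjoint f v = 0)"
    by (auto dest: spec[of _ "adjoint f v"])
  also have "\<dots> \<longleftrightarrow> (\<forall>e\<in>range f. v \<bullet> e = 0)"
    by (simp add: adjoint_works[OF linear] inner_commute)
  finally show ?thesis .
qed

lemma pos_cone_vimage:
  assumes "X \<subseteq> range f"
  shows "pos_cone (f -` X) = f -` pos_cone X"
proof
  show "pos_cone (f -` X) \<subseteq> f -` pos_cone X"
    unfolding pos_cone_def by (force simp: linear_cmul[OF linear])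
  show "f -` pos_cone X \<subseteq> pos_cone (f -` X)"
  proof
    fix x assume "x \<in> f -` pos_cone X"
    then obtain c u where "f x = c *\<^sub>R u" "0 < c" "u \<in> X"
      unfolding pos_cone_def by auto
    then have "x = c *\<^sub>R adjoint f u" "adjoint f u \<in> f -` X"
      using assms adjoint_left_inverse[of x] map_adjoint_on_range[of u]
      by (auto simp: linear_cmul[OF linear_adjoint])
    then show "x \<in> pos_cone (f -` X)"
      unfolding pos_cone_def using \<open>0 < c\<close> by blast
  qed
qed

lemma convex_pos_cone_vimage_geod_convex:
  assumes "geod_convex X" "X \<subseteq> range f" "\<And>x. x \<in> X \<Longrightarrow> 0 < x \<bullet> q"
  shows "convex (pos_cone (f -` X))"
  unfolding pos_cone_vimage[OF assms(2)]
  by (rule convex_linear_vimage[OF linear convex_pos_cone_geod_convex[OF assms(1,3)]])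

lemma vimage_open_hemisphere: "f -` open_hemisphere (range f) (f p) = {x. norm x = 1 \<and> 0 < x \<bullet> p}"
  by (auto simp: open_hemisphere_def norm_preserving inner_preserving)

lemma vimage_adjoint_halfspace: "adjoint f -` {y. 0 < y \<bullet> p} = {x. 0 < x \<bullet> f p}"
  by (auto simp: adjoint_works[OF linear] inner_commute)

lemma negligible_kernel_adjoint: "negligible {z. adjoint f z = 0}"
proof -
  obtain b :: 'a where "b \<in> Basis"
    using nonempty_Basis by blast
  then have "f b \<noteq> 0"
    using norm_preserving[of b] by auto
  moreover have "{z. adjoint f z = 0} \<subseteq> {z. f b \<bullet> z = 0}"
    by (auto simp: adjoint_works[OF linear, symmetric])
  ultimately show ?thesis
    using negligible_hyperplane negligible_subset by blast
qed

abbreviation orthogonal_sphere :: "'b set" where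
  "orthogonal_sphere \<equiv> sphere 0 1 \<inter> {v. \<forall>e\<in>range f. v \<bullet> e = 0}"

lemma sph_cone_join_subset:
  assumes X: "X \<subseteq> sphere 0 1 \<inter> range f"
  shows "sph_cone (sph_join X orthogonal_sphere)
       \<subseteq> adjoint f -` pos_cone (f -` X) \<inter> cball 0 1 \<union> {z. adjoint f z = 0}"
proof
  fix z assume "z \<in> sph_cone (sph_join X orthogonal_sphere)"
  then obtain s t u v where z: "z = s *\<^sub>R (cos t *\<^sub>R u + sin t *\<^sub>R v)" "0 \<le> s" "s \<le> 1"
    and u: "u \<in> X" and v: "v \<in> orthogonal_sphere" and t: "t \<in> {0..pi/2}"
    unfolding sph_cone_def sph_join_def by auto
  have "adjoint f v = 0" "u \<bullet> v = 0"
    using u v X by (auto simp: adjoint_eq_0_iff inner_commute)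
  then have gz: "adjoint f z = (s * cos t) *\<^sub>R adjoint f u"
    unfolding z(1) using linear_adjoint by (simp add: linear_add linear_cmul)
  have "norm (cos t *\<^sub>R u + sin t *\<^sub>R v) ^ 2 = norm (cos t *\<^sub>R u) ^ 2 + norm (sin t *\<^sub>R v) ^ 2"
    using \<open>u \<bullet> v = 0\<close> by (intro norm_add_Pythagorean) (simp add: orthogonal_def)
  also have "\<dots> = 1"
    using u v X by (auto simp: power_mult_distrib)
  finally have "norm (cos t *\<^sub>R u + sin t *\<^sub>R v) = 1"
    using norm_ge_zero[of "cos t *\<^sub>R u + sin t *\<^sub>R v"] by (auto simp: power2_eq_1_iff)
  then have "norm z \<le> 1"
    using z by simp
  have "0 \<le> s * cos t"
    using z t by (simp add: cos_ge_zero)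
  have "adjoint f u \<in> f -` X"
    using u X map_adjoint_on_range[of u] by auto
  show "z \<in> adjoint f -` pos_cone (f -` X) \<inter> cball 0 1 \<union> {z. adjoint f z = 0}"
  proof (cases "s * cos t = 0")
    case False
    with \<open>0 \<le> s * cos t\<close> have "0 < s * cos t"
      by linarith
    then have "adjoint f z \<in> pos_cone (f -` X)"
      unfolding pos_cone_def gz using \<open>adjoint f u \<in> f -` X\<close> by blast
    with \<open>norm z \<le> 1\<close> show ?thesis
      by simp
  qed (simp add: gz)
qed

lemma orthogonal_sphere_nonempty:
  assumes "DIM('a) < DIM('b)"
  obtains v where "v \<in> orthogonal_sphere"
proof -
  have "dim (range f) < DIM('b)"
    using dim_image_le[OF linear, of UNIV] assms by simp
  then obtain x where "x \<noteq> 0" "\<And>y. y \<in> span (range f) \<Longrightarrow> orthogonal x y"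
    using orthogonal_to_subspace_exists by blast
  then have "x /\<^sub>R norm x \<in> orthogonal_sphere"
    using span_base[of _ "range f"] by (auto simp: orthogonal_def)
  then show ?thesis
    by (rule that)
qed

lemma sph_cone_join_supset:
  assumes X: "X \<subseteq> sphere 0 1" and dim: "DIM('a) < DIM('b)"
  shows "adjoint f -` pos_cone (f -` X) \<inter> cball 0 1 \<subseteq> sph_cone (sph_join X orthogonal_sphere)"
proof
  fix z assume z: "z \<in> adjoint f -` pos_cone (f -` X) \<inter> cball 0 1"
  then obtain c y where gz: "adjoint f z = c *\<^sub>R y" and "0 < c" and u: "f y \<in> X"
    unfolding pos_cone_def by auto
  define q where "q = z - f (adjoint f z)"
  obtain v0 where v0: "v0 \<in> orthogonal_sphere"
    using orthogonal_sphere_nonempty[OF dim] by blast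
  define v where "v = (if q = 0 then v0 else q /\<^sub>R norm q)"
  have "adjoint f q = 0"
    unfolding q_def by (simp add: linear_diff[OF linear_adjoint])
  then have "v \<in> orthogonal_sphere" and q: "q = norm q *\<^sub>R v"
    using v0 by (auto simp: v_def adjoint_eq_0_iff)
  have z_eq: "z = c *\<^sub>R f y + norm q *\<^sub>R v"
    using q unfolding q_def gz by (simp add: linear_cmul[OF linear])
  have "norm (f y) = 1"
    using u X by auto
  moreover have "norm z ^ 2 = norm (adjoint f z) ^ 2 + norm q ^ 2"
    unfolding q_def by (rule norm_split_adjoint)
  ultimately have "norm z ^ 2 = c ^ 2 + norm q ^ 2"
    using \<open>0 < c\<close> by (simp add: gz norm_preserving)
  define s where "s = norm z"
  have "c ^ 2 \<le> s ^ 2"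
    unfolding s_def using \<open>norm z ^ 2 = c ^ 2 + norm q ^ 2\<close> zero_le_power2[of "norm q"] by linarith
  then have "c \<le> s"
    by (rule power2_le_imp_le) (simp add: s_def)
  then have "0 < s"
    using \<open>0 < c\<close> by linarith
  have "s \<le> 1"
    using z by (simp add: s_def)
  define t where "t = arccos (c / s)"
  have cs: "0 \<le> c / s" "c / s \<le> 1"
    using \<open>c \<le> s\<close> \<open>0 < s\<close> \<open>0 < c\<close> by simp_all
  then have t: "t \<in> {0..pi/2}" and "s * cos t = c"
    unfolding t_def using \<open>0 < s\<close> arccos_le_pi2[of "c / s"] arccos_lbound[of "c / s"] by simp_all
  moreover have "s * sin t = norm q"
  proof -
    have "c ^ 2 / s ^ 2 \<le> 1"
      using \<open>c \<le> s\<close> \<open>0 < s\<close> \<open>0 < c\<close> by (simp add: divide_le_eq_1 power_mono)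
    then have "(s * sin t) ^ 2 = s ^ 2 * (1 - c ^ 2 / s ^ 2)"
      unfolding t_def using cs by (simp add: sin_arccos power_mult_distrib power_divide)
    also have "\<dots> = s ^ 2 - c ^ 2"
      using \<open>0 < s\<close> by (simp add: right_diff_distrib)
    finally have "(s * sin t) ^ 2 = norm q ^ 2"
      using \<open>norm z ^ 2 = c ^ 2 + norm q ^ 2\<close> s_def by simp
    moreover have "0 \<le> sin t"
      using t by (intro sin_ge_zero) auto
    ultimately show ?thesis
      using power2_eq_iff_nonneg[of "s * sin t" "norm q"] \<open>0 < s\<close> by simp
  qed
  ultimately have "z = s *\<^sub>R (cos t *\<^sub>R f y + sin t *\<^sub>R v)"
    using z_eq by (simp add: scaleR_add_right)
  moreover have "cos t *\<^sub>R f y + sin t *\<^sub>R v \<in> sph_join X orthogonal_sphere"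
    unfolding sph_join_def using u \<open>v \<in> orthogonal_sphere\<close> t by blast
  ultimately show "z \<in> sph_cone (sph_join X orthogonal_sphere)"
    unfolding sph_cone_def using \<open>0 < s\<close> \<open>s \<le> 1\<close> by fastforce
qed

lemma measure_sph_cone_join:
  assumes X: "X \<subseteq> sphere 0 1 \<inter> range f" and dim: "DIM('a) < DIM('b)"
    and convex: "convex (pos_cone (f -` X))"
  shows "measure lebesgue (sph_cone (sph_join X orthogonal_sphere))
       = measure lebesgue (adjoint f -` pos_cone (f -` X) \<inter> cball 0 1)"
proof (rule measure_negligible_symdiff)
  show "adjoint f -` pos_cone (f -` X) \<inter> cball 0 1 \<in> lmeasurable"
    using convex by (intro measurable_convex convex_Int convex_linear_vimage linear_adjoint bounded_Int) auto
  show "negligible (adjoint f -` pos_cone (f -` X) \<inter> cball 0 1 - sph_cone (sph_join X orthogonal_sphere)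
      \<union> (sph_cone (sph_join X orthogonal_sphere) - adjoint f -` pos_cone (f -` X) \<inter> cball 0 1))"
    using sph_cone_join_subset[OF X] sph_cone_join_supset[OF _ dim] X
    by (intro negligible_subset[OF negligible_kernel_adjoint]) blast
qed

end

theorem mainTheorem2:
  fixes f :: "'k::euclidean_space \<Rightarrow> 'n::euclidean_space"
    and E :: "'n set" and o' :: 'n and Xk :: "'n set"
  assumes k_ge: "2 \<le> DIM('k)"
    and k_le: "DIM('k) + 1 \<le> DIM('n)"
    and f_lin: "linear f"
    and f_isom: "\<And>x. norm (f x) = norm x"
    and E_def: "E = range f"
    and o_sph: "o' \<in> sphere 0 1"
    and o_E: "o' \<in> E"
    and Xk_sub: "Xk \<subseteq> sphere 0 1 \<inter> E"
    and Xk_dim: "\<exists>x\<in>Xk. \<exists>e>0. ball x e \<inter> sphere 0 1 \<inter> E \<subseteq> Xk"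
    and Xk_conv: "geod_convex Xk"
    and Xk_symm: "sph_reflect o' ` Xk = Xk"
    and o_Xk: "o' \<in> Xk"
    and Xk_hemi: "Xk \<subseteq> open_hemisphere E o'"
  shows "sph_vol (sph_join Xk (sphere 0 1 \<inter> {v. \<forall>e\<in>E. v \<bullet> e = 0}))
           / sph_vol (open_hemisphere UNIV o')
         = sph_vol (f -` Xk) / sph_vol (f -` open_hemisphere E o')"
proof -
  interpret linear_isometry f
    by (rule linear_isometry.intro[OF f_lin f_isom])
  obtain p where p: "o' = f p"
    using o_E E_def by blast
  define C where "C = pos_cone (f -` Xk)"
  define H where "H = {y. 0 < y \<bullet> p}"
  define r where "r = measure lebesgue (cball (0 :: 'n) 1) / measure lebesgue (cball (0 :: 'k) 1)"
  have Xk: "Xk \<subseteq> sphere 0 1 \<inter> range f"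
    using Xk_sub E_def by simp
  have C: "convex C" "pos_scale_invariant C"
    unfolding C_def using Xk_conv Xk Xk_hemi
    by (auto simp: open_hemisphere_def pos_scale_invariant_pos_cone intro!: convex_pos_cone_vimage_geod_convex)
  have H: "convex H" "pos_scale_invariant H"
    unfolding H_def using convex_halfspace_gt[of 0 p] pos_scale_invariant_halfspace[of p]
    by (simp_all add: inner_commute)
  have "measure lebesgue (sph_cone (sph_join Xk (sphere 0 1 \<inter> {v. \<forall>e\<in>E. v \<bullet> e = 0})))
      = r * measure lebesgue (C \<inter> cball 0 1)"
    using measure_sph_cone_join[OF Xk _ C(1)[unfolded C_def]] measure_vimage_adjoint_convex_cone[OF C] k_le
    by (simp add: C_def E_def r_def)
  moreover have "measure lebesgue (sph_cone (open_hemisphere UNIV o')) = r * measure lebesgue (H \<inter> cball 0 1)"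
    using measure_sph_cone_hemisphere[of o']
      measure_vimage_adjoint_convex_cone[OF H, unfolded H_def vimage_adjoint_halfspace p[symmetric]]
    by (simp add: H_def open_hemisphere_def conj_commute r_def)
  moreover have "measure lebesgue (sph_cone (f -` Xk)) = measure lebesgue (C \<inter> cball 0 1)"
  proof (rule measure_sph_cone[of "f -` Xk", folded C_def, OF _ C(1)])
    show "f -` Xk \<subseteq> sphere 0 1"
      using Xk by (auto simp: norm_preserving)
  qed
  moreover have "measure lebesgue (sph_cone (f -` open_hemisphere E o')) = measure lebesgue (H \<inter> cball 0 1)"
    using measure_sph_cone_hemisphere[of p] by (simp add: H_def E_def p vimage_open_hemisphere)
  moreover have "0 < r"
    unfolding r_def using content_cball_pos[of 1 "0 :: 'k"] content_cball_pos[of 1 "0 :: 'n"] by simp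
  ultimately show ?thesis
    unfolding sph_vol_def by simp
qed

end
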